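(* Let $\tau:\mathcal{X}\to\mathcal{X}$ be a continuous map on a sequentially compact topological space $\mathcal{X}$, let $\mathcal{F}\subseteq\mathcal{X}$ be nonempty, and let $S:\mathcal{X}\to\mathbb{R}$ be a multi-central Lyapunov function for $\tau$ around $\mathcal{F}$. Let $\mathcal{X}/\mathcal{F}$ be the quotient space obtained by collapsing $\mathcal{F}$ to a single point $[\mathcal{F}]$, with quotient map $\varphi:\mathcal{X}\to\mathcal{X}/\mathcal{F}$ and the quotient topology. Define $\tilde\tau:\mathcal{X}/\mathcal{F}\to\mathcal{X}/\mathcal{F}$ by $\tilde\tau([x])=\varphi(\tau(x))$ for $x\notin\mathcal{F}$ and $\tilde\tau([\mathcal{F}])=[\mathcal{F}]$. Then $\tilde\tau$ is mixing with fixed point $[\mathcal{F}]$, i.e. $\tilde\tau^n(y)\to[\mathcal{F}]$ for every $y\in\mathcal{X}/\mathcal{F}$.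
   Context: $\tau^n$ is the $n$-fold composition of $\tau$. A continuous map $S:\mathcal{X}\to\mathbb{R}$ is a multi-central Lyapunov function for $\tau$ around $\mathcal{F}\subseteq\mathcal{X}$ if for every $x\in\mathcal{X}$ the sequence $S(\tau^n(x))$ converges, $S$ is constant on $\mathcal{F}$, $\tau(\mathcal{F})\subseteq\mathcal{F}$, and $\lim_{n\to\infty}S(\tau^n(x))\neq S(x)$ for all $x\notin\mathcal{F}$. *)

theory Defs
  imports "HOL-Analysis.Analysis"
begin

definition seq_compact_space :: "'a topology \<Rightarrow> bool" where
  "seq_compact_space X \<longleftrightarrow>
     (\<forall>x::nat \<Rightarrow> 'a. (\<forall>n. x n \<in> topspace X) \<longrightarrow>
        (\<exists>r l. strict_mono r \<and> limitin X (x \<circ> r) l sequentially))"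

definition multi_central_lyapunov ::
  "'a topology \<Rightarrow> ('a \<Rightarrow> 'a) \<Rightarrow> 'a set \<Rightarrow> ('a \<Rightarrow> real) \<Rightarrow> bool" where
  "multi_central_lyapunov X \<tau> F S \<longleftrightarrow>
     continuous_map X euclideanreal S \<and>
     (\<forall>x\<in>topspace X. convergent (\<lambda>n. S ((\<tau> ^^ n) x))) \<and>
     (\<exists>c. \<forall>x\<in>F. S x = c) \<and>
     \<tau> ` F \<subseteq> F \<and>
     (\<forall>x\<in>topspace X - F. lim (\<lambda>n. S ((\<tau> ^^ n) x)) \<noteq> S x)"

definition collapse :: "'a set \<Rightarrow> 'a \<Rightarrow> 'a set" where
  "collapse F x = (if x \<in> F then F else {x})"

definition collapsed_map :: "'a set \<Rightarrow> ('a \<Rightarrow> 'a) \<Rightarrow> 'a set \<Rightarrow> 'a set" where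
  "collapsed_map F \<tau> c = (if c = F then F else collapse F (\<tau> (the_elem c)))"

end

theory Submission
  imports Defs "HOL-Library.Infinite_Set"
begin

text \<open>
  Every limit point z of an orbit of \<tau> lies in F: if the iterates of x along times t k
  tend to z, then by continuity those along times m + t k tend to the m-th iterate of z,
  so S is constant on the orbit of z, equal to the limit of S along the orbit of x; hence the limit of S along the orbit of z equals S z, which is excluded outside F.
  By sequential compactness every orbit therefore eventually enters each open neighbourhood
  of F, and these neighbourhoods are exactly the preimages of the neighbourhoods of the
  point [F] of the quotient.
\<close>

lemma continuous_map_funpow:
  "continuous_map X X f \<Longrightarrow> continuous_map X X (f ^^ n)"
  by (induction n) (auto intro: continuous_map_compose)

lemma funpow_collapsed_map_collapse:
  assumes "\<tau> ` F \<subseteq> F"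
  shows "(collapsed_map F \<tau> ^^ n) (collapse F x) = collapse F ((\<tau> ^^ n) x)"
proof (induction n)
  case 0
  then show ?case by simp
next
  case (Suc n)
  show ?case
  proof (cases "(\<tau> ^^ n) x \<in> F")
    case True
    then have "\<tau> ((\<tau> ^^ n) x) \<in> F" using assms by blast
    with Suc True show ?thesis by (simp add: collapsed_map_def collapse_def)
  next
    case False
    then have "{(\<tau> ^^ n) x} \<noteq> F" by blast
    with Suc False show ?thesis by (simp add: collapsed_map_def collapse_def)
  qed
qed

lemma multi_central_lyapunov_limit_point_in_center:
  assumes \<tau>: "continuous_map X X \<tau>" and S: "multi_central_lyapunov X \<tau> F S"
    and x: "x \<in> topspace X" and t: "strict_mono t"
    and lim: "limitin X (\<lambda>k. (\<tau> ^^ t k) x) z sequentially"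
  shows "z \<in> F"
proof (rule ccontr)
  assume "z \<notin> F"
  moreover have z: "z \<in> topspace X" using lim by (rule limitin_topspace)
  ultimately have lim_neq: "lim (\<lambda>n. S ((\<tau> ^^ n) z)) \<noteq> S z"
    using S unfolding multi_central_lyapunov_def by blast
  have S_cont: "continuous_map X euclideanreal S"
    using S unfolding multi_central_lyapunov_def by blast
  define L where "L = lim (\<lambda>n. S ((\<tau> ^^ n) x))"
  have "(\<lambda>n. S ((\<tau> ^^ n) x)) \<longlonglongrightarrow> L"
    using S x unfolding multi_central_lyapunov_def by (simp add: L_def convergent_LIMSEQ_iff)
  have S_orbit_z: "S ((\<tau> ^^ m) z) = L" for m
  proof -
    have "limitin X ((\<tau> ^^ m) \<circ> (\<lambda>k. (\<tau> ^^ t k) x)) ((\<tau> ^^ m) z) sequentially"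
      by (rule continuous_map_limit[OF continuous_map_funpow[OF \<tau>] lim])
    from continuous_map_limit[OF S_cont this]
    have "(\<lambda>k. S ((\<tau> ^^ (m + t k)) x)) \<longlonglongrightarrow> S ((\<tau> ^^ m) z)"
      by (simp add: comp_def funpow_add)
    moreover have "strict_mono (\<lambda>k. m + t k)"
      using t by (simp add: strict_mono_def)
    with \<open>(\<lambda>n. S ((\<tau> ^^ n) x)) \<longlonglongrightarrow> L\<close>
    have "(\<lambda>k. S ((\<tau> ^^ (m + t k)) x)) \<longlonglongrightarrow> L"
      by (auto dest: LIMSEQ_subseq_LIMSEQ simp: comp_def)
    ultimately show ?thesis by (rule LIMSEQ_unique)
  qed
  then have "S z = L" and "lim (\<lambda>n. S ((\<tau> ^^ n) z)) = L"
    using S_orbit_z[of 0] by simp_all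
  with lim_neq show False by simp
qed

lemma multi_central_lyapunov_orbit_eventually_in:
  assumes \<tau>: "continuous_map X X \<tau>" and X: "seq_compact_space X"
    and S: "multi_central_lyapunov X \<tau> F S"
    and x: "x \<in> topspace X" and V: "openin X V" "F \<subseteq> V"
  shows "eventually (\<lambda>n. (\<tau> ^^ n) x \<in> V) sequentially"
proof (rule ccontr)
  assume "\<not> ?thesis"
  then have "infinite {n. (\<tau> ^^ n) x \<notin> V}"
    by (simp add: cofinite_eq_sequentially[symmetric] eventually_cofinite)
  then obtain r :: "nat \<Rightarrow> nat" where r: "strict_mono r" "\<And>k. (\<tau> ^^ r k) x \<notin> V"
    using infinite_enumerate by blast
  have orbit_in: "(\<tau> ^^ n) x \<in> topspace X" for n
    using continuous_map_funpow[OF \<tau>] x by (simp add: continuous_map_def Pi_iff)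
  then obtain s z where s: "strict_mono s"
    and lim: "limitin X ((\<lambda>k. (\<tau> ^^ r k) x) \<circ> s) z sequentially"
    using X unfolding seq_compact_space_def
    by (elim allE[where x = "\<lambda>k. (\<tau> ^^ r k) x"]) blast
  have "z \<in> F"
    using multi_central_lyapunov_limit_point_in_center[OF \<tau> S x, of "r \<circ> s" z]
      strict_mono_o[OF r(1) s] lim by (simp add: comp_def)
  moreover have "z \<in> topspace X - V"
    using V r(2) orbit_in by (intro limitin_closedin[OF lim]) auto
  ultimately show False using V by blast
qed

lemma limitin_collapse:
  assumes Q: "quotient_map X Q (collapse F)" and F: "F \<subseteq> topspace X" "F \<noteq> {}"
    and ev: "\<And>V. \<lbrakk>openin X V; F \<subseteq> V\<rbrakk> \<Longrightarrow> eventually (\<lambda>n. x n \<in> V) sequentially"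
  shows "limitin Q (\<lambda>n. collapse F (x n)) F sequentially"
  unfolding limitin_def
proof (intro conjI allI impI)
  have image: "collapse F ` topspace X = topspace Q"
    using Q unfolding quotient_map_def by blast
  obtain f where "f \<in> F" using F(2) by blast
  with F(1) image show "F \<in> topspace Q" by (force simp: collapse_def)
  fix U assume U: "openin Q U \<and> F \<in> U"
  define V where "V = {x \<in> topspace X. collapse F x \<in> U}"
  have "openin X V"
    using Q U openin_subset unfolding quotient_map_def V_def by blast
  moreover have "F \<subseteq> V" using U F(1) by (auto simp: V_def collapse_def)
  ultimately have "eventually (\<lambda>n. x n \<in> V) sequentially" by (rule ev)
  then show "eventually (\<lambda>n. collapse F (x n) \<in> U) sequentially"
    by eventually_elim (simp add: V_def)
qed

theorem mainTheorem6:
  fixes X :: "'a topology" and Q :: "'a set topology"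
    and \<tau> :: "'a \<Rightarrow> 'a" and F :: "'a set" and S :: "'a \<Rightarrow> real"
  assumes "continuous_map X X \<tau>"
    and "seq_compact_space X"
    and "F \<subseteq> topspace X" and "F \<noteq> {}"
    and "multi_central_lyapunov X \<tau> F S"
    and "quotient_map X Q (collapse F)"
  shows "collapsed_map F \<tau> F = F \<and>
         (\<forall>y\<in>topspace Q. limitin Q (\<lambda>n. (collapsed_map F \<tau> ^^ n) y) F sequentially)"
proof (intro conjI ballI)
  show "collapsed_map F \<tau> F = F" by (simp add: collapsed_map_def)
next
  fix y assume "y \<in> topspace Q"
  then obtain x where x: "x \<in> topspace X" "y = collapse F x"
    using assms(6) unfolding quotient_map_def by blast
  have "\<tau> ` F \<subseteq> F" using assms(5) unfolding multi_central_lyapunov_def by blast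
  then have "(collapsed_map F \<tau> ^^ n) y = collapse F ((\<tau> ^^ n) x)" for n
    using x(2) by (simp add: funpow_collapsed_map_collapse)
  moreover have "limitin Q (\<lambda>n. collapse F ((\<tau> ^^ n) x)) F sequentially"
    by (rule limitin_collapse[OF assms(6,3,4)])
      (rule multi_central_lyapunov_orbit_eventually_in[OF assms(1,2,5) x(1)])
  ultimately show "limitin Q (\<lambda>n. (collapsed_map F \<tau> ^^ n) y) F sequentially"
    by simp
qed

end
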